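(* The function $a\mapsto\lambda_c(a):=\|\mathbf T_{\kappa^{(a)}}\|^{-1}$ is non-increasing on $(0,\infty)$.
   Context: Fix $\tau\in(2,3)$, $\alpha=1/(\tau-1)$, constants $c_{\mathrm F},\mu>0$. For $a>0$ let $\Lambda_a(dx)=dx/a$ be normalized Lebesgue measure on $(0,a]$, $\kappa^{(a)}(u,v)=a\big[1-e^{-c_{\mathrm F}^2(uv)^{-\alpha}/\mu}\big]$ for $u,v\in(0,a]$, and $\mathbf T_{\kappa^{(a)}}$ the integral operator on $L^2((0,a],\Lambda_a)$ given by $(\mathbf T_{\kappa^{(a)}}f)(u)=\int_0^a\kappa^{(a)}(u,v)f(v)\Lambda_a(dv)$; $\|\cdot\|$ is the operator norm. *)

theory Defs
  imports "HOL-Analysis.Analysis"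
begin

definition kappa :: "real \<Rightarrow> real \<Rightarrow> real \<Rightarrow> real \<Rightarrow> real \<Rightarrow> real \<Rightarrow> real" where
  "kappa tau cF mu a u v =
     a * (1 - exp (- (cF\<^sup>2 * (u * v) powr (- (1 / (tau - 1)))) / mu))"

definition Lam_int :: "real \<Rightarrow> (real \<Rightarrow> real) \<Rightarrow> real" where
  "Lam_int a g = (1 / a) * (LBINT v:{0<..a}. g v)"

text \<open>Elements of L^2((0,a], Lambda_a) (real-valued representatives).\<close>
definition L2_on :: "real \<Rightarrow> (real \<Rightarrow> real) set" where
  "L2_on a = {f. f \<in> borel_measurable lborel \<and>
                 set_integrable lborel {0<..a} (\<lambda>x. (f x)\<^sup>2)}"

definition T_op :: "real \<Rightarrow> real \<Rightarrow> real \<Rightarrow> real \<Rightarrow> (real \<Rightarrow> real) \<Rightarrow> (real \<Rightarrow> real)" where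
  "T_op tau cF mu a f = (\<lambda>u. Lam_int a (\<lambda>v. kappa tau cF mu a u v * f v))"

definition L2_norm_on :: "real \<Rightarrow> (real \<Rightarrow> real) \<Rightarrow> real" where
  "L2_norm_on a f = sqrt (Lam_int a (\<lambda>x. (f x)\<^sup>2))"

definition T_norm :: "real \<Rightarrow> real \<Rightarrow> real \<Rightarrow> real \<Rightarrow> real" where
  "T_norm tau cF mu a =
     Sup ((\<lambda>f. L2_norm_on a (T_op tau cF mu a f)) ` {f \<in> L2_on a. L2_norm_on a f \<le> 1})"

definition lambda_c :: "real \<Rightarrow> real \<Rightarrow> real \<Rightarrow> real \<Rightarrow> real" where
  "lambda_c tau cF mu a = inverse (T_norm tau cF mu a)"

end

(* Since kappa^(a) = a kappa^(1), the operator is (T_a f)(u) = int_0^a kappa^(1)(u,v) f(v) dv.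
   For a <= b, a unit vector f of L^2(Lambda_a), extended by zero and multiplied by sqrt(b/a), is
   a unit vector g of L^2(Lambda_b) with T_b g = sqrt(b/a) T_a f on all of (0,b]; integrating
   (T_a f)^2 over the larger interval gives ||T_a f|| <= ||T_b g||, hence ||T_a|| <= ||T_b||.
   Since 0 < kappa^(1) <= 1 these norms are finite and positive, so their inverses decrease. *)
theory Submission
  imports Defs
begin

lemma set_integrable_indicator_subset:
  fixes h :: "'a \<Rightarrow> real"
  assumes "A \<subseteq> B"
  shows "set_integrable M B (\<lambda>x. indicator A x * h x) \<longleftrightarrow> set_integrable M A h"
proof -
  have "(\<lambda>x. indicator B x *\<^sub>R (indicator A x * h x)) = (\<lambda>x. indicator A x *\<^sub>R h x)"
    using assms by (auto simp: indicator_def fun_eq_iff)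
  then show ?thesis unfolding set_integrable_def by simp
qed

lemma set_integral_indicator_subset:
  fixes h :: "'a \<Rightarrow> real"
  assumes "A \<subseteq> B"
  shows "(LINT x:B|M. indicator A x * h x) = (LINT x:A|M. h x)"
proof -
  have "(\<lambda>x. indicator B x *\<^sub>R (indicator A x * h x)) = (\<lambda>x. indicator A x *\<^sub>R h x)"
    using assms by (auto simp: indicator_def fun_eq_iff)
  then show ?thesis unfolding set_lebesgue_integral_def by simp
qed

lemma set_integral_mono_subset:
  fixes h :: "'a \<Rightarrow> real"
  assumes "A \<subseteq> B" "A \<in> sets M" "set_integrable M B h" "\<And>x. x \<in> B \<Longrightarrow> 0 \<le> h x"
  shows "(LINT x:A|M. h x) \<le> (LINT x:B|M. h x)"
proof -
  have "set_integrable M A h"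
    using set_integrable_subset assms(1-3) by blast
  then have "set_integrable M B (\<lambda>x. indicator A x * h x)"
    using set_integrable_indicator_subset[OF assms(1)] by blast
  then have "(LINT x:B|M. indicator A x * h x) \<le> (LINT x:B|M. h x)"
    using assms by (intro set_integral_mono) (auto simp: indicator_def)
  then show ?thesis
    by (simp add: set_integral_indicator_subset[OF assms(1)])
qed

lemma set_integrable_const_Ioc: "set_integrable lborel {0<..(a::real)} (\<lambda>_. c::real)"
proof -
  have "emeasure lborel {0<..a} < \<infinity>" by (cases "0 \<le> a") auto
  then have "integrable lborel (\<lambda>x. indicat_real {0<..a} x * c)"
    by (intro integrable_mult_left integrable_real_indicator) auto
  then show ?thesis unfolding set_integrable_def by simp
qed

lemma set_integral_const_Ioc: "0 \<le> a \<Longrightarrow> (LBINT x:{0<..(a::real)}. (c::real)) = a * c"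
  by (subst set_integral_const) auto

text \<open>AM-GM, \<open>|f| \<le> (1 + f\<^sup>2) / 2\<close>, replaces Cauchy-Schwarz here.\<close>
lemma set_integral_bounded_weight:
  fixes k f :: "'a \<Rightarrow> real"
  assumes A: "A \<in> sets M" "emeasure M A < \<infinity>"
    and meas: "k \<in> borel_measurable M" "f \<in> borel_measurable M"
    and f2: "set_integrable M A (\<lambda>x. (f x)\<^sup>2)" and k: "\<And>x. \<bar>k x\<bar> \<le> 1"
  shows "set_integrable M A (\<lambda>x. k x * f x)"
    and "\<bar>LINT x:A|M. k x * f x\<bar> \<le> (measure M A + (LINT x:A|M. (f x)\<^sup>2)) / 2"
proof -
  define g where "g x = (1 + (f x)\<^sup>2) / 2" for x
  have one: "set_integrable M A (\<lambda>_. 1::real)"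
    using A unfolding set_integrable_def by simp
  have g: "set_integrable M A g"
    unfolding g_def using set_integral_add(1)[OF one f2] by simp
  have bound: "\<bar>k x * f x\<bar> \<le> g x" for x
  proof -
    have "\<bar>k x * f x\<bar> \<le> \<bar>f x\<bar>"
      using k[of x] by (simp add: abs_mult mult_left_le_one_le)
    also have "\<bar>f x\<bar> \<le> g x"
      unfolding g_def using sum_squares_ge_zero[of "\<bar>f x\<bar> - 1" 0]
      by (simp add: power2_eq_square algebra_simps)
    finally show ?thesis .
  qed
  show kf: "set_integrable M A (\<lambda>x. k x * f x)"
    using A meas bound
    by (intro set_integrable_bound[OF g]) (auto simp: set_borel_measurable_def intro!: order_trans[OF _ abs_ge_self])
  have "\<bar>LINT x:A|M. k x * f x\<bar> \<le> (LINT x:A|M. \<bar>k x * f x\<bar>)"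
    using set_integral_norm_bound[OF kf] by simp
  also have "\<dots> \<le> (LINT x:A|M. g x)"
    using kf g bound by (intro set_integral_mono set_integrable_abs)
  also have "\<dots> = (measure M A + (LINT x:A|M. (f x)\<^sup>2)) / 2"
    unfolding g_def using one f2 A by (simp add: set_integral_const)
  finally show "\<bar>LINT x:A|M. k x * f x\<bar> \<le> (measure M A + (LINT x:A|M. (f x)\<^sup>2)) / 2" .
qed

lemma kappa_scale: "kappa tau cF mu a u v = a * kappa tau cF mu 1 u v"
  unfolding kappa_def by simp

lemma kappa_measurable:
  "(\<lambda>(u, v). kappa tau cF mu a u v) \<in> borel_measurable (lborel \<Otimes>\<^sub>M lborel)"
  "(\<lambda>v. kappa tau cF mu a u v) \<in> borel_measurable lborel"
  unfolding kappa_def by measurable measurable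

lemma abs_kappa_unit_le_one:
  assumes "mu > 0"
  shows "\<bar>kappa tau cF mu 1 u v\<bar> \<le> 1"
proof -
  have "0 \<le> cF\<^sup>2 * (u * v) powr (- (1 / (tau - 1))) / mu"
    using assms by simp
  then show ?thesis
    unfolding kappa_def by simp
qed

lemma kappa_unit_pos:
  assumes "cF \<noteq> 0" "mu > 0" "u > 0" "v > 0"
  shows "0 < kappa tau cF mu 1 u v"
proof -
  have "0 < cF\<^sup>2 * (u * v) powr (- (1 / (tau - 1))) / mu"
    using assms by simp
  then show ?thesis
    unfolding kappa_def by simp
qed

lemma kappa_unit_antimono:
  assumes "1 \<le> tau" "mu > 0" "0 < u * v" "u * v \<le> s * t"
  shows "kappa tau cF mu 1 s t \<le> kappa tau cF mu 1 u v"
proof -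
  have "(s * t) powr (- (1 / (tau - 1))) \<le> (u * v) powr (- (1 / (tau - 1)))"
    using assms by (intro powr_mono2') auto
  then have "cF\<^sup>2 * (s * t) powr (- (1 / (tau - 1))) / mu \<le> cF\<^sup>2 * (u * v) powr (- (1 / (tau - 1))) / mu"
    using assms by (intro divide_right_mono mult_left_mono) auto
  then show ?thesis
    unfolding kappa_def by simp
qed

definition L2_unit_ball :: "real \<Rightarrow> (real \<Rightarrow> real) set" where
  "L2_unit_ball a = {f \<in> L2_on a. L2_norm_on a f \<le> 1}"

lemma T_norm_eq_Sup:
  "T_norm tau cF mu a = Sup ((\<lambda>f. L2_norm_on a (T_op tau cF mu a f)) ` L2_unit_ball a)"
  unfolding T_norm_def L2_unit_ball_def ..

lemma L2_unit_ballD: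
  assumes "f \<in> L2_unit_ball a" "a > 0"
  shows "f \<in> borel_measurable lborel"
    and "set_integrable lborel {0<..a} (\<lambda>x. (f x)\<^sup>2)"
    and "(LBINT x:{0<..a}. (f x)\<^sup>2) \<le> a"
proof -
  show "f \<in> borel_measurable lborel" "set_integrable lborel {0<..a} (\<lambda>x. (f x)\<^sup>2)"
    using assms unfolding L2_unit_ball_def L2_on_def by auto
  have "(1 / a) * (LBINT x:{0<..a}. (f x)\<^sup>2) \<le> 1"
    using assms unfolding L2_unit_ball_def L2_norm_on_def Lam_int_def by simp
  then show "(LBINT x:{0<..a}. (f x)\<^sup>2) \<le> a"
    using assms by (simp add: field_simps)
qed

lemma const_one_in_L2_unit_ball: "a > 0 \<Longrightarrow> (\<lambda>_. 1) \<in> L2_unit_ball a"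
  unfolding L2_unit_ball_def L2_on_def L2_norm_on_def Lam_int_def
  by (auto simp: set_integrable_const_Ioc set_integral_const_Ioc)

lemma T_op_eq_integral:
  "a \<noteq> 0 \<Longrightarrow> T_op tau cF mu a f u = (LBINT v:{0<..a}. kappa tau cF mu 1 u v * f v)"
  unfolding T_op_def Lam_int_def by (subst kappa_scale) (simp add: mult.assoc)

lemma T_op_measurable:
  assumes "f \<in> borel_measurable lborel"
  shows "T_op tau cF mu a f \<in> borel_measurable lborel"
proof -
  have "(\<lambda>u. LBINT v:{0<..a}. kappa tau cF mu a u v * f v) \<in> borel_measurable lborel"
    unfolding set_lebesgue_integral_def
    by (rule lborel.borel_measurable_lebesgue_integral) (use kappa_measurable(1) assms in measurable)
  then show ?thesis
    unfolding T_op_def Lam_int_def by measurable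
qed

lemma abs_T_op_le:
  assumes a: "a > 0" and mu: "mu > 0" and f: "f \<in> L2_unit_ball a"
  shows "\<bar>T_op tau cF mu a f u\<bar> \<le> a"
proof -
  have "\<bar>LBINT v:{0<..a}. kappa tau cF mu 1 u v * f v\<bar>
          \<le> (measure lborel {0<..a} + (LBINT v:{0<..a}. (f v)\<^sup>2)) / 2"
    using L2_unit_ballD[OF f a] abs_kappa_unit_le_one[OF mu]
    using a by (intro set_integral_bounded_weight kappa_measurable) auto
  also have "\<dots> \<le> a"
    using L2_unit_ballD(3)[OF f a] a by simp
  finally show ?thesis
    using a by (simp add: T_op_eq_integral)
qed

lemma set_integrable_T_op_square:
  assumes "a > 0" "mu > 0" "f \<in> L2_unit_ball a"
  shows "set_integrable lborel {0<..b} (\<lambda>u. (T_op tau cF mu a f u)\<^sup>2)"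
proof (rule set_integrable_bound[OF set_integrable_const_Ioc[of b "a\<^sup>2"]])
  show "set_borel_measurable lborel {0<..b} (\<lambda>u. (T_op tau cF mu a f u)\<^sup>2)"
    using L2_unit_ballD(1)[OF assms(3,1)] unfolding set_borel_measurable_def
    by (intro borel_measurable_scaleR borel_measurable_power T_op_measurable) auto
  have "\<bar>T_op tau cF mu a f u\<bar>\<^sup>2 \<le> a\<^sup>2" for u
    using abs_T_op_le[OF assms] by (intro power_mono) auto
  then show "AE u in lborel. u \<in> {0<..b} \<longrightarrow> norm ((T_op tau cF mu a f u)\<^sup>2) \<le> norm (a\<^sup>2)"
    by simp
qed

lemma L2_norm_T_op_le:
  assumes "a > 0" "mu > 0" "f \<in> L2_unit_ball a"
  shows "L2_norm_on a (T_op tau cF mu a f) \<le> a"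
proof -
  have "(LBINT u:{0<..a}. (T_op tau cF mu a f u)\<^sup>2) \<le> (LBINT u:{0<..a}. a\<^sup>2)"
    using abs_T_op_le[OF assms]
    by (intro set_integral_mono set_integrable_T_op_square[OF assms] set_integrable_const_Ioc)
       (metis abs_le_square_iff abs_of_pos assms(1))
  then have "(1 / a) * (LBINT u:{0<..a}. (T_op tau cF mu a f u)\<^sup>2) \<le> a\<^sup>2"
    using assms(1) by (simp add: set_integral_const_Ioc field_simps power2_eq_square)
  then have "L2_norm_on a (T_op tau cF mu a f) \<le> sqrt (a\<^sup>2)"
    unfolding L2_norm_on_def Lam_int_def by (rule real_sqrt_le_mono)
  then show ?thesis
    using assms(1) by simp
qed

lemma bdd_above_T_norm_set:
  "a > 0 \<Longrightarrow> mu > 0 \<Longrightarrow>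
     bdd_above ((\<lambda>f. L2_norm_on a (T_op tau cF mu a f)) ` L2_unit_ball a)"
  by (rule bdd_aboveI2[where M = a]) (rule L2_norm_T_op_le)

section \<open>Monotonicity of the operator norm\<close>

definition rescaled_extension :: "real \<Rightarrow> real \<Rightarrow> (real \<Rightarrow> real) \<Rightarrow> real \<Rightarrow> real" where
  "rescaled_extension a b f x = sqrt (b / a) * (indicator {0<..a} x * f x)"

lemma rescaled_extension_in_L2_unit_ball:
  assumes a: "0 < a" and ab: "a \<le> b" and f: "f \<in> L2_unit_ball a"
  shows "rescaled_extension a b f \<in> L2_unit_ball b"
proof -
  have Ioc_sub: "{0<..a} \<subseteq> {0<..b}"
    using ab by auto
  have sq: "(rescaled_extension a b f x)\<^sup>2 = (b / a) * (indicator {0<..a} x * (f x)\<^sup>2)" for x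
    using a ab by (simp add: rescaled_extension_def power_mult_distrib indicator_def)
  have "rescaled_extension a b f \<in> borel_measurable lborel"
    unfolding rescaled_extension_def using L2_unit_ballD(1)[OF f a] by measurable
  moreover have "set_integrable lborel {0<..b} (\<lambda>x. (rescaled_extension a b f x)\<^sup>2)"
    unfolding sq using L2_unit_ballD(2)[OF f a] set_integrable_indicator_subset[OF Ioc_sub]
    by (intro set_integrable_mult_right) simp
  moreover have "L2_norm_on b (rescaled_extension a b f) = L2_norm_on a f"
    using a ab unfolding L2_norm_on_def Lam_int_def sq
    by (simp add: set_integral_indicator_subset[OF Ioc_sub])
  ultimately show ?thesis
    using f unfolding L2_unit_ball_def L2_on_def by simp
qed

lemma T_op_rescaled_extension:
  assumes "0 < a" "a \<le> b"
  shows "T_op tau cF mu b (rescaled_extension a b f) u = sqrt (b / a) * T_op tau cF mu a f u"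
proof -
  have "T_op tau cF mu b (rescaled_extension a b f) u
          = (LBINT v:{0<..b}. sqrt (b / a) * (indicator {0<..a} v * (kappa tau cF mu 1 u v * f v)))"
    using assms by (simp add: T_op_eq_integral rescaled_extension_def ac_simps)
  also have "\<dots> = sqrt (b / a) * (LBINT v:{0<..b}. indicator {0<..a} v * (kappa tau cF mu 1 u v * f v))"
    by (rule set_integral_mult_right)
  also have "\<dots> = sqrt (b / a) * T_op tau cF mu a f u"
    using assms by (subst set_integral_indicator_subset) (auto simp: T_op_eq_integral)
  finally show ?thesis .
qed

lemma L2_norm_T_op_le_rescaled_extension:
  assumes a: "0 < a" and ab: "a \<le> b" and mu: "mu > 0" and f: "f \<in> L2_unit_ball a"
  shows "L2_norm_on a (T_op tau cF mu a f)
           \<le> L2_norm_on b (T_op tau cF mu b (rescaled_extension a b f))"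
proof -
  have "(1 / a) * (LBINT u:{0<..a}. (T_op tau cF mu a f u)\<^sup>2)
          \<le> (1 / a) * (LBINT u:{0<..b}. (T_op tau cF mu a f u)\<^sup>2)"
    using a ab set_integrable_T_op_square[OF a mu f]
    by (intro mult_left_mono set_integral_mono_subset) auto
  also have "\<dots> = (1 / b) * (LBINT u:{0<..b}. (T_op tau cF mu b (rescaled_extension a b f) u)\<^sup>2)"
    using a ab by (simp add: T_op_rescaled_extension power_mult_distrib)
  finally show ?thesis
    unfolding L2_norm_on_def Lam_int_def by (rule real_sqrt_le_mono)
qed

lemma T_norm_mono:
  assumes a: "0 < a" and ab: "a \<le> b" and mu: "mu > 0"
  shows "T_norm tau cF mu a \<le> T_norm tau cF mu b"
  unfolding T_norm_eq_Sup
proof (rule cSup_mono)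
  show "bdd_above ((\<lambda>f. L2_norm_on b (T_op tau cF mu b f)) ` L2_unit_ball b)"
    using a ab mu by (intro bdd_above_T_norm_set) auto
  show "(\<lambda>f. L2_norm_on a (T_op tau cF mu a f)) ` L2_unit_ball a \<noteq> {}"
    using const_one_in_L2_unit_ball[OF a] by blast
  show "\<exists>y \<in> (\<lambda>g. L2_norm_on b (T_op tau cF mu b g)) ` L2_unit_ball b. x \<le> y"
    if "x \<in> (\<lambda>f. L2_norm_on a (T_op tau cF mu a f)) ` L2_unit_ball a" for x
    using that L2_norm_T_op_le_rescaled_extension[OF a ab mu]
      rescaled_extension_in_L2_unit_ball[OF a ab] by blast
qed

lemma L2_norm_T_op_one_pos:
  assumes tau: "1 \<le> tau" and cF: "cF \<noteq> 0" and mu: "mu > 0" and a: "a > 0"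
  shows "0 < L2_norm_on a (T_op tau cF mu a (\<lambda>_. 1))"
proof -
  define c where "c = a * kappa tau cF mu 1 a a"
  have c: "0 < c"
    unfolding c_def using kappa_unit_pos[OF cF mu a a] a by simp
  have "c \<le> T_op tau cF mu a (\<lambda>_. 1) u" if u: "u \<in> {0<..a}" for u
  proof -
    have "(LBINT v:{0<..a}. kappa tau cF mu 1 a a) \<le> (LBINT v:{0<..a}. kappa tau cF mu 1 u v * 1)"
      using u a abs_kappa_unit_le_one[OF mu]
      by (intro set_integral_mono set_integrable_const_Ioc set_integral_bounded_weight(1) kappa_measurable)
         (auto intro!: kappa_unit_antimono[OF tau mu] mult_mono simp: set_integrable_const_Ioc)
    then show ?thesis
      unfolding c_def using a by (simp add: T_op_eq_integral set_integral_const_Ioc)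
  qed
  then have "(LBINT u:{0<..a}. c\<^sup>2) \<le> (LBINT u:{0<..a}. (T_op tau cF mu a (\<lambda>_. 1) u)\<^sup>2)"
    using c a mu const_one_in_L2_unit_ball[OF a]
    by (intro set_integral_mono set_integrable_const_Ioc set_integrable_T_op_square power_mono) auto
  moreover have "0 < (LBINT u:{0<..a}. c\<^sup>2)"
    using a c by (simp add: set_integral_const_Ioc)
  ultimately show ?thesis
    unfolding L2_norm_on_def Lam_int_def using a by simp
qed

lemma T_norm_pos:
  assumes "1 \<le> tau" "cF \<noteq> 0" "mu > 0" "a > 0"
  shows "0 < T_norm tau cF mu a"
proof -
  have "L2_norm_on a (T_op tau cF mu a (\<lambda>_. 1)) \<le> T_norm tau cF mu a"
    unfolding T_norm_eq_Sup using assms const_one_in_L2_unit_ball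
    by (intro cSup_upper bdd_above_T_norm_set imageI) auto
  then show ?thesis
    using L2_norm_T_op_one_pos[OF assms] by linarith
qed

theorem lemma4p3:
  fixes tau cF mu :: real
  assumes "2 < tau" "tau < 3" "cF > 0" "mu > 0"
  shows "\<forall>a b. 0 < a \<longrightarrow> a \<le> b \<longrightarrow> lambda_c tau cF mu b \<le> lambda_c tau cF mu a"
proof (intro allI impI)
  fix a b :: real
  assume "0 < a" "a \<le> b"
  then have "T_norm tau cF mu a \<le> T_norm tau cF mu b" "0 < T_norm tau cF mu a"
    using assms by (simp_all add: T_norm_mono T_norm_pos)
  then show "lambda_c tau cF mu b \<le> lambda_c tau cF mu a"
    unfolding lambda_c_def by (rule le_imp_inverse_le)
qed

end
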